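(* Let $X$, $Y$ be topological spaces, $F\subset X\times Y$ a subspace, and $p\colon F\to X$, $q\colon F\to Y$ the canonical projections. Let $H$ denote homology with coefficients in a field $K$, and assume $HX$, $HF$, $HY$ are finite dimensional. Let $$h=(h_X,h_F,h_Y)\colon \bigl(HX \xleftarrow{p_*} HF \xrightarrow{q_*} HY\bigr)\xrightarrow{\ \cong\ } \bigoplus_{1\le b\le d\le 3}\mathbb{I}[b,d]^{m_{b,d}}$$ be any isomorphism of representations of the quiver $\circ\leftarrow\circ\rightarrow\circ$ onto a direct sum of interval representations. Let $\pi_X$ be the projection of the vertex-1 space of $\bigoplus\mathbb{I}[b,d]^{m_{b,d}}$ onto the vertex-1 space of the summand $\mathbb{I}[1,3]^{m_{1,3}}$ (a copy of $K^{m_{1,3}}$), and $\iota_Y$ the inclusion of the vertex-3 space of $\mathbb{I}[1,3]^{m_{1,3}}$ (again $K^{m_{1,3}}$) into the vertex-3 space of $\bigoplus\mathbb{I}[b,d]^{m_{b,d}}$; identify these two copies of $K^{m_{1,3}}$ via the identity maps of $\mathbb{I}[1,3]$. Define $F_*:=h_Y^{-1}\circ\iota_Y\circ\pi_X\circ h_X\colon HX\to HY$. If $p_*$ is surjective ($\operatorname{Im}p_*=HX$) and $q_*(\operatorname{Ker}p_* )=0$, then $F_*=q_*\circ p_*^{-1}$, where $q_*\circ p_*^{-1}$ denotes the well-defined linear map sending $p_*(z)$ to $q_*(z)$.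
   Context: For a field $K$, the interval representation $\mathbb{I}[b,d]$ ($1\le b\le d\le 3$) of the quiver $1\leftarrow 2\rightarrow 3$ has $K$ at vertices $i\in\{b,\dots,d\}$ and $0$ elsewhere, with identity maps between consecutive copies of $K$ and zero maps otherwise. $\mathbb{I}[b,d]^{m}$ denotes the direct sum of $m$ copies. *)

theory Defs
  imports Complex_Main "HOL-Library.Function_Algebras"
begin

text \<open>The direct sum
of interval representations  (+)_{1<=b<=d<=3} I[b,d]^(m b d)  of the quiver
1 <- 2 -> 3 is modelled concretely inside the function space
nat * nat * nat => 'k: the coordinate (b,d,j) is the j-th copy (j < m b d)
of the summand I[b,d].\<close>

definition fscale :: "'k::field \<Rightarrow> ('i \<Rightarrow> 'k) \<Rightarrow> ('i \<Rightarrow> 'k)" where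
  "fscale c f = (\<lambda>i. c * f i)"

definition findim :: "('k::field \<Rightarrow> 'v::ab_group_add \<Rightarrow> 'v) \<Rightarrow> bool" where
  "findim s \<longleftrightarrow> (\<exists>B. finite B \<and> module.span s B = UNIV)"

definition ivl_vtx :: "(nat \<Rightarrow> nat \<Rightarrow> nat) \<Rightarrow> nat \<Rightarrow> (nat \<times> nat \<times> nat \<Rightarrow> 'k::field) set" where
  "ivl_vtx m v = {f. \<forall>b d j. f (b, d, j) \<noteq> 0 \<longrightarrow>
      1 \<le> b \<and> b \<le> v \<and> v \<le> d \<and> d \<le> 3 \<and> j < m b d}"

definition ivl_map21 :: "(nat \<times> nat \<times> nat \<Rightarrow> 'k::field) \<Rightarrow> (nat \<times> nat \<times> nat \<Rightarrow> 'k)" where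
  "ivl_map21 f = (\<lambda>(b, d, j). if b \<le> 1 then f (b, d, j) else 0)"

definition ivl_map23 :: "(nat \<times> nat \<times> nat \<Rightarrow> 'k::field) \<Rightarrow> (nat \<times> nat \<times> nat \<Rightarrow> 'k)" where
  "ivl_map23 f = (\<lambda>(b, d, j). if 3 \<le> d then f (b, d, j) else 0)"

definition rep_iso ::
  "('k::field \<Rightarrow> 'x::ab_group_add \<Rightarrow> 'x) \<Rightarrow> ('k \<Rightarrow> 'f::ab_group_add \<Rightarrow> 'f) \<Rightarrow> ('k \<Rightarrow> 'y::ab_group_add \<Rightarrow> 'y)
   \<Rightarrow> ('f \<Rightarrow> 'x) \<Rightarrow> ('f \<Rightarrow> 'y) \<Rightarrow> (nat \<Rightarrow> nat \<Rightarrow> nat)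
   \<Rightarrow> ('x \<Rightarrow> (nat \<times> nat \<times> nat \<Rightarrow> 'k)) \<Rightarrow> ('f \<Rightarrow> (nat \<times> nat \<times> nat \<Rightarrow> 'k))
   \<Rightarrow> ('y \<Rightarrow> (nat \<times> nat \<times> nat \<Rightarrow> 'k)) \<Rightarrow> bool" where
  "rep_iso sX sF sY p q m hX hF hY \<longleftrightarrow>
     Vector_Spaces.linear sX fscale hX \<and> Vector_Spaces.linear sF fscale hF \<and> Vector_Spaces.linear sY fscale hY \<and>
     bij_betw hX UNIV (ivl_vtx m 1) \<and> bij_betw hF UNIV (ivl_vtx m 2) \<and>
     bij_betw hY UNIV (ivl_vtx m 3) \<and>
     (\<forall>z. hX (p z) = ivl_map21 (hF z)) \<and> (\<forall>z. hY (q z) = ivl_map23 (hF z))"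

text \<open>K^n is modelled as functions
nat => 'k vanishing at indices >= n.\<close>
definition piX :: "(nat \<Rightarrow> nat \<Rightarrow> nat) \<Rightarrow> (nat \<times> nat \<times> nat \<Rightarrow> 'k::field) \<Rightarrow> (nat \<Rightarrow> 'k)" where
  "piX m f = (\<lambda>j. if j < m 1 3 then f (1, 3, j) else 0)"

definition iotaY :: "(nat \<Rightarrow> nat \<Rightarrow> nat) \<Rightarrow> (nat \<Rightarrow> 'k::field) \<Rightarrow> (nat \<times> nat \<times> nat \<Rightarrow> 'k)" where
  "iotaY m g = (\<lambda>(b, d, j). if b = 1 \<and> d = 3 \<and> j < m 1 3 then g j else 0)"

definition Fstar :: "(nat \<Rightarrow> nat \<Rightarrow> nat) \<Rightarrow> ('x \<Rightarrow> (nat \<times> nat \<times> nat \<Rightarrow> 'k::field))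
   \<Rightarrow> ('y \<Rightarrow> (nat \<times> nat \<times> nat \<Rightarrow> 'k)) \<Rightarrow> 'x \<Rightarrow> 'y" where
  "Fstar m hX hY = inv hY \<circ> iotaY m \<circ> piX m \<circ> hX"

end

theory Submission
  imports Defs
begin

text \<open>An interval summand \<open>\<bbbI>[2,3]\<close> would provide an element of \<open>Ker p\<^sub>*\<close>
  not killed by \<open>q\<^sub>*\<close>, so the hypothesis \<open>q\<^sub>*(Ker p\<^sub>*) = 0\<close> forces \<open>m\<^sub>2\<^sub>,\<^sub>3 = 0\<close>.  Among the
  summands living at vertex 2, \<open>\<bbbI>[1,3]\<close> is then the only one reaching vertex 3, and also the
  only one reaching both vertices 1 and 3; hence \<open>\<iota>\<^sub>Y \<circ> \<pi>\<^sub>X\<close> composed with the structure map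
  towards vertex 1 equals the structure map towards vertex 3, and transporting along \<open>h\<close>
  gives \<open>F\<^sub>* \<circ> p\<^sub>* = q\<^sub>*\<close>.\<close>

lemma linear_map_zero: "Vector_Spaces.linear s1 s2 f \<Longrightarrow> f 0 = 0"
  unfolding Vector_Spaces.linear_iff by (metis add_cancel_right_right add_0)

lemma bij_linear_eq_zero_iff:
  assumes "Vector_Spaces.linear s1 s2 h" and "bij_betw h UNIV A"
  shows "h x = 0 \<longleftrightarrow> x = 0"
  using assms(2) linear_map_zero[OF assms(1)] unfolding bij_betw_def inj_on_def by auto

lemma iotaY_piX_ivl_map21:
  assumes "f \<in> ivl_vtx m 2" and "m 2 3 = 0"
  shows "iotaY m (piX m (ivl_map21 f)) = ivl_map23 f"
proof
  fix i :: "nat \<times> nat \<times> nat"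
  obtain b d j where i: "i = (b, d, j)" by (cases i)
  have "1 \<le> b \<and> b \<le> 2 \<and> 2 \<le> d \<and> d \<le> 3 \<and> j < m b d" if "f (b, d, j) \<noteq> 0"
    using assms(1) that unfolding ivl_vtx_def by auto
  then show "iotaY m (piX m (ivl_map21 f)) i = ivl_map23 f i"
    using assms(2) unfolding i iotaY_def piX_def ivl_map21_def ivl_map23_def
    by (cases "f (b, d, j) = 0") (auto simp: le_Suc_eq numeral_2_eq_2 numeral_3_eq_3)
qed

lemma rep_iso_no_interval_23:
  fixes hF :: "'f::ab_group_add \<Rightarrow> (nat \<times> nat \<times> nat \<Rightarrow> 'k::field)"
  assumes iso: "rep_iso sX sF sY p q m hX hF hY"
    and ker: "\<forall>z. p z = 0 \<longrightarrow> q z = 0"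
  shows "m 2 3 = 0"
proof (rule ccontr)
  assume "m 2 3 \<noteq> 0"
  define e :: "nat \<times> nat \<times> nat \<Rightarrow> 'k" where "e = (\<lambda>i. if i = (2, 3, 0) then 1 else 0)"
  have "e \<in> ivl_vtx m 2"
    using \<open>m 2 3 \<noteq> 0\<close> unfolding e_def ivl_vtx_def by auto
  then obtain w where w: "hF w = e"
    using iso unfolding rep_iso_def bij_betw_def by (metis imageE)
  have "hX (p w) = 0"
    using iso w unfolding rep_iso_def ivl_map21_def e_def by (auto simp: fun_eq_iff)
  then have "p w = 0"
    using iso bij_linear_eq_zero_iff unfolding rep_iso_def by metis
  then have "hY (q w) = 0"
    using ker iso linear_map_zero unfolding rep_iso_def by metis
  moreover have "hY (q w) (2, 3, 0) = 1"
    using iso w unfolding rep_iso_def ivl_map23_def e_def by simp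
  ultimately show False by simp
qed

theorem mainTheorem1:
  fixes sX :: "'k::field \<Rightarrow> 'x::ab_group_add \<Rightarrow> 'x"
    and sF :: "'k \<Rightarrow> 'f::ab_group_add \<Rightarrow> 'f"
    and sY :: "'k \<Rightarrow> 'y::ab_group_add \<Rightarrow> 'y"
    and p :: "'f \<Rightarrow> 'x" and q :: "'f \<Rightarrow> 'y"
    and m :: "nat \<Rightarrow> nat \<Rightarrow> nat"
    and hX :: "'x \<Rightarrow> (nat \<times> nat \<times> nat \<Rightarrow> 'k)"
    and hF :: "'f \<Rightarrow> (nat \<times> nat \<times> nat \<Rightarrow> 'k)"
    and hY :: "'y \<Rightarrow> (nat \<times> nat \<times> nat \<Rightarrow> 'k)"
  assumes "vector_space sX" and "vector_space sF" and "vector_space sY"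
    and "findim sX" and "findim sF" and "findim sY"
    and "Vector_Spaces.linear sF sX p" and "Vector_Spaces.linear sF sY q"
    and "rep_iso sX sF sY p q m hX hF hY"
    and "surj p"
    and "\<forall>z. p z = 0 \<longrightarrow> q z = 0"
  shows "\<forall>z. Fstar m hX hY (p z) = q z"
proof
  fix z
  have m23: "m 2 3 = 0"
    using rep_iso_no_interval_23 assms(9,11) .
  have hF_z: "hF z \<in> ivl_vtx m 2" and hX_p: "hX (p z) = ivl_map21 (hF z)"
    and hY_q: "hY (q z) = ivl_map23 (hF z)" and inj_hY: "inj hY"
    using assms(9) unfolding rep_iso_def bij_betw_def by auto
  have "Fstar m hX hY (p z) = inv hY (iotaY m (piX m (ivl_map21 (hF z))))"
    by (simp add: Fstar_def hX_p)
  also have "\<dots> = inv hY (hY (q z))"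
    by (simp add: iotaY_piX_ivl_map21[OF hF_z m23] hY_q)
  also have "\<dots> = q z"
    using inj_hY by simp
  finally show "Fstar m hX hY (p z) = q z" .
qed

end
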